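(* Let $\lambda>0$ and $0<\nu_n\le1$ for $n\ge1$, and let $p_*^{\nu_n}(n,t)$ be the solution of $$\partial_t^{\nu_n} p_*^{\nu_n}(n,t)=-\lambda n\,p_*^{\nu_n}(n,t)+\lambda (n-1)\,p_*^{\nu_{n-1}}(n-1,t),\qquad n\geq 1,$$ with $p_*^{\nu_0}(0,t)=0$, $p_*^{\nu_1}(1,0)=1$ and $p_*^{\nu_n}(n,0)=0$ for $n\ge2$ (the state dependent linear birth process, i.e. the state dependent fractional pure birth process with $\lambda_n=\lambda n$). Then $$p^{\nu_n}_*(n,t)=\frac{(-1)^{n-1}}{n}\sum_{k=n-1}^{\infty}(-\lambda)^k\sum_{\Lambda^k_n}\frac{t^{\sum_{j=1}^nk_j\nu_j}\prod_{j=1}^nj^{k_j}}{\Gamma\big(1+\sum_{j=1}^nk_j\nu_j\big)},\qquad n\geq1,$$ where $\Lambda^k_n=\{(k_1,\ldots,k_n):\ \sum_{j=1}^nk_j=k,\ k_1\in\mathbb{N}_0,\ k_j\in\mathbb{N}_0\setminus\{0\} \text{ for } 2\leq j\leq n\}$.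
   Context: $\mathbb{N}_0$ denotes the set of nonnegative integers. For $0<\nu<1$, $\partial_t^{\nu}f(t)=\frac{1}{\Gamma(1-\nu)}\int_0^t (t-s)^{-\nu}f'(s)\,\mathrm{d}s$ is the Caputo derivative, and $\partial_t^{1}f=f'$. *)

theory Defs
  imports "HOL-Analysis.Analysis"
begin

definition caputo :: "real \<Rightarrow> (real \<Rightarrow> real) \<Rightarrow> real \<Rightarrow> real" where
  "caputo nu f t =
     (if nu = 1 then deriv f t
      else (1 / Gamma (1 - nu)) * integral {0..t} (\<lambda>s. (t - s) powr (- nu) * deriv f s))"

definition caputo_regular :: "real \<Rightarrow> (real \<Rightarrow> real) \<Rightarrow> bool" where
  "caputo_regular nu f \<longleftrightarrow>
     continuous_on {0..} f \<and>
     (\<forall>t>0. f differentiable (at t)) \<and>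
     (nu < 1 \<longrightarrow> (\<forall>t>0. (\<lambda>s. (t - s) powr (- nu) * deriv f s) absolutely_integrable_on {0..t}))"

text \<open>Lambda^k_n: tuples (k_1,...,k_n), encoded as a list ks of length n with k_j = ks!(j-1),
  summing to k, with k_j >= 1 for 2 <= j <= n.\<close>
definition Lambda_set :: "nat \<Rightarrow> nat \<Rightarrow> nat list set" where
  "Lambda_set n k = {ks. length ks = n \<and> sum_list ks = k \<and> (\<forall>j\<in>{2..n}. ks ! (j - 1) \<ge> 1)}"

end

theory Submission
  imports Defs
begin

text \<open>Applying the Riemann--Liouville integral \<open>I\<^sup>\<nu>\<close> to the Caputo equation (Fubini and the
  Beta integral) turns it into the Volterra equation
  \<open>p\<^sub>n = p\<^sub>n(0) + I\<^sup>\<nu>\<^sup>n(-\<lambda> n p\<^sub>n + \<lambda> (n - 1) p\<^sub>n\<^sub>-\<^sub>1)\<close>.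
  The \<open>k\<close>-th term \<open>T\<^sub>n\<^sub>,\<^sub>k\<close> of the series is a combination of normalised powers \<open>t\<^sup>a / \<Gamma>(1 + a)\<close>,
  which \<open>I\<^sup>\<nu>\<close> maps to \<open>t\<^sup>a\<^sup>+\<^sup>\<nu> / \<Gamma>(1 + a + \<nu>)\<close>; splitting \<open>\<Lambda>\<^sup>k\<^sup>+\<^sup>1\<^sub>n\<close> according to whether the
  last entry is \<open>1\<close> gives \<open>T\<^sub>n\<^sub>,\<^sub>k\<^sub>+\<^sub>1 = I\<^sup>\<nu>\<^sup>n(-\<lambda> n T\<^sub>n\<^sub>,\<^sub>k + \<lambda> (n - 1) T\<^sub>n\<^sub>-\<^sub>1\<^sub>,\<^sub>k)\<close>.
  Since \<open>\<Gamma>(1 + a) \<ge> \<lfloor>a\<rfloor>! / 2\<close>, the terms decay geometrically on bounded intervals, so the series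
  converges uniformly and solves the same Volterra equation. Induction on \<open>n\<close> and uniqueness
  for the homogeneous Abel--Volterra equation identify it with \<open>p\<^sub>n\<close>; the terms with
  \<open>k < n - 1\<close> vanish because \<open>\<Lambda>\<^sup>k\<^sub>n\<close> is empty.\<close>

section \<open>The Riemann--Liouville integral\<close>

lemma powr_kernel_has_integral:
  fixes nu a t :: real
  assumes nu: "nu > 0" and at: "a \<le> t"
  shows "((\<lambda>s. (t - s) powr (nu - 1)) has_integral (t - a) powr nu / nu) {a..t}"
proof -
  define F where "F = (\<lambda>s. - ((t - s) powr nu) / nu)"
  have "((\<lambda>s. (t - s) powr (nu - 1)) has_integral (F t - F a)) {a..t}"
  proof (rule fundamental_theorem_of_calculus_interior[OF at])
    show "continuous_on {a..t} F" unfolding F_def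
      using nu by (intro continuous_intros continuous_on_powr') auto
    fix s assume s: "s \<in> {a<..<t}"
    have "(F has_real_derivative (- (nu * (t - s) powr (nu - 1) * (0 - 1)) / nu)) (at s)"
      unfolding F_def using s nu by (intro derivative_eq_intros) auto
    then show "(F has_vector_derivative (t - s) powr (nu - 1)) (at s)"
      using nu by (simp add: has_real_derivative_iff_has_vector_derivative[symmetric])
  qed
  then show ?thesis using nu by (simp add: F_def)
qed

lemma Beta_has_integral_interval:
  fixes a b u t :: real
  assumes a: "a > 0" and b: "b > 0" and ut: "u < t"
  shows "((\<lambda>s. (s - u) powr (a - 1) * (t - s) powr (b - 1)) has_integral
            (t - u) powr (a + b - 1) * Beta a b) {u..t}"
proof -
  define m where "m = 1 / (t - u)"
  define c where "c = - u / (t - u)"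
  have tu: "t - u > 0" using ut by simp
  have m: "m > 0" using tu by (simp add: m_def)
  have "((\<lambda>x. x powr (a - 1) * (1 - x) powr (b - 1)) has_integral Beta a b) (cbox 0 1)"
    using has_integral_Beta_real[OF a b] by simp
  from has_integral_affinity'[OF this m, of c]
  have affine: "((\<lambda>x. (m * x + c) powr (a - 1) * (1 - (m * x + c)) powr (b - 1)) has_integral Beta a b / m)
        {(0 - c) / m..(1 - c) / m}" by (simp add: divide_inverse mult.commute)
  have ends: "(0 - c) / m = u" "(1 - c) / m = t"
  proof -
    show "(0 - c) / m = u" using tu by (simp add: m_def c_def)
    have "t / (t - u) = (t - u) / (t - u) + u / (t - u)" by (metis add_divide_distrib diff_add_cancel)
    then have "1 - c = t / (t - u)" using tu by (simp add: c_def)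
    then show "(1 - c) / m = t" using tu by (simp add: m_def)
  qed
  have integrand: "(m * x + c) powr (a - 1) * (1 - (m * x + c)) powr (b - 1) =
      (t - u) powr (2 - a - b) * ((x - u) powr (a - 1) * (t - x) powr (b - 1))" if x: "x \<in> {u..t}" for x
  proof -
    have "m * x + c = (x - u) / (t - u)" using tu by (simp add: m_def c_def diff_divide_distrib)
    moreover have "1 - (m * x + c) = (t - x) / (t - u)" unfolding calculation
    proof -
      have "(t - x) / (t - u) = (t - u) / (t - u) - (x - u) / (t - u)"
        using diff_divide_distrib[of "t - u" "x - u" "t - u"] by simp
      then show "1 - (x - u) / (t - u) = (t - x) / (t - u)" using tu by simp
    qed
    moreover have "(x - u) / (t - u) \<ge> 0" "(t - x) / (t - u) \<ge> 0" using x ut by auto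
    moreover have "(t - u) powr (2 - a - b) = 1 / ((t - u) powr (a - 1) * (t - u) powr (b - 1))"
    proof -
      have "(t - u) powr (a - 1) * (t - u) powr (b - 1) = (t - u) powr (a + b - 2)"
        by (simp add: powr_add[symmetric])
      moreover have "(t - u) powr (2 - a - b) = (t - u) powr (- (a + b - 2))" by (simp add: algebra_simps)
      ultimately show ?thesis by (metis powr_minus_divide)
    qed
    ultimately show ?thesis using x ut by (simp add: powr_divide)
  qed
  have "((\<lambda>x. (t - u) powr (2 - a - b) * ((x - u) powr (a - 1) * (t - x) powr (b - 1)))
      has_integral Beta a b / m) {u..t}"
    using affine integrand unfolding ends by (rule has_integral_eq[rotated])
  from has_integral_mult_right[OF this, of "(t - u) powr (a + b - 2)"]
  have "((\<lambda>x. (t - u) powr (a + b - 2) * ((t - u) powr (2 - a - b) * ((x - u) powr (a - 1) * (t - x) powr (b - 1))))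
      has_integral (t - u) powr (a + b - 2) * (Beta a b / m)) {u..t}" .
  moreover have "(t - u) powr (a + b - 2) * ((t - u) powr (2 - a - b) * y) = y" for y
    using ut by (simp add: powr_add[symmetric] mult.assoc[symmetric])
  moreover have "(t - u) powr (a + b - 2) * (Beta a b / m) = (t - u) powr (a + b - 1) * Beta a b"
    using tu by (simp add: m_def powr_add[symmetric] powr_diff power2_eq_square)
  ultimately show ?thesis by simp
qed

lemma powr_kernel_absolutely_integrable:
  fixes nu a t :: real
  assumes "nu > 0" and "a \<le> t"
  shows "(\<lambda>s. (t - s) powr (nu - 1)) absolutely_integrable_on {a..t}"
  using powr_kernel_has_integral[OF assms] by (intro nonnegative_absolutely_integrable_1) auto

lemma powr_kernel_mult_absolutely_integrable:
  fixes nu a t :: real and g :: "real \<Rightarrow> real"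
  assumes nu: "nu > 0" and at: "a \<le> t" and g: "continuous_on {a..t} g"
  shows "(\<lambda>s. (t - s) powr (nu - 1) * g s) absolutely_integrable_on {a..t}"
proof -
  have "(\<lambda>s. g s * (t - s) powr (nu - 1)) absolutely_integrable_on {a..t}"
  proof (rule absolutely_integrable_bounded_measurable_product_real)
    show "g \<in> borel_measurable (lebesgue_on {a..t})"
      using g by (intro continuous_imp_measurable_on_sets_lebesgue) auto
    show "bounded (g ` {a..t})" using g compact_continuous_image compact_imp_bounded by blast
  qed (use powr_kernel_absolutely_integrable[OF nu at] in auto)
  then show ?thesis by (simp add: mult.commute)
qed

lemma powr_kernel_mult_integrable:
  fixes nu a t :: real and g :: "real \<Rightarrow> real"
  assumes "nu > 0" and "a \<le> t" and "continuous_on {a..t} g"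
  shows "(\<lambda>s. (t - s) powr (nu - 1) * g s) integrable_on {a..t}"
  using powr_kernel_mult_absolutely_integrable[OF assms] set_lebesgue_integral_eq_integral(1) by blast

definition frac_integral :: "real \<Rightarrow> (real \<Rightarrow> real) \<Rightarrow> real \<Rightarrow> real" where
  "frac_integral nu g t = integral {0..t} (\<lambda>s. (t - s) powr (nu - 1) * g s) / Gamma nu"

lemma frac_integral_cmult: "frac_integral nu (\<lambda>s. c * g s) t = c * frac_integral nu g t"
proof -
  have "(\<lambda>s. (t - s) powr (nu - 1) * (c * g s)) = (\<lambda>s. c *\<^sub>R ((t - s) powr (nu - 1) * g s))"
    by (simp add: algebra_simps)
  then show ?thesis by (simp add: frac_integral_def)
qed

lemma frac_integral_cong:
  "(\<And>s. s \<in> {0..t} \<Longrightarrow> g s = h s) \<Longrightarrow> frac_integral nu g t = frac_integral nu h t"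
  unfolding frac_integral_def by (metis (no_types, lifting) integral_cong)

lemma frac_integral_add:
  fixes nu t :: real and g h :: "real \<Rightarrow> real"
  assumes nu: "nu > 0" and t: "t \<ge> 0" and g: "continuous_on {0..t} g" and h: "continuous_on {0..t} h"
  shows "frac_integral nu (\<lambda>s. g s + h s) t = frac_integral nu g t + frac_integral nu h t"
proof -
  have "integral {0..t} (\<lambda>s. (t - s) powr (nu - 1) * (g s + h s)) =
      integral {0..t} (\<lambda>s. (t - s) powr (nu - 1) * g s + (t - s) powr (nu - 1) * h s)"
    by (simp add: algebra_simps)
  also have "\<dots> = integral {0..t} (\<lambda>s. (t - s) powr (nu - 1) * g s) + integral {0..t} (\<lambda>s. (t - s) powr (nu - 1) * h s)"
    by (rule integral_add[OF powr_kernel_mult_integrable[OF nu t g] powr_kernel_mult_integrable[OF nu t h]])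
  finally show ?thesis by (simp add: frac_integral_def add_divide_distrib)
qed

lemma frac_integral_diff:
  fixes nu t :: real and g h :: "real \<Rightarrow> real"
  assumes nu: "nu > 0" and t: "t \<ge> 0" and g: "continuous_on {0..t} g" and h: "continuous_on {0..t} h"
  shows "frac_integral nu (\<lambda>s. g s - h s) t = frac_integral nu g t - frac_integral nu h t"
  using frac_integral_add[OF nu t g, of "\<lambda>s. - h s"] h frac_integral_cmult[of nu "- 1" h t]
  by (simp add: continuous_on_minus)

lemma frac_integral_sum:
  fixes nu t :: real and g :: "'i \<Rightarrow> real \<Rightarrow> real"
  assumes nu: "nu > 0" and t: "t \<ge> 0" and g: "\<And>i. i \<in> S \<Longrightarrow> continuous_on {0..t} (g i)"
  shows "frac_integral nu (\<lambda>s. \<Sum>i\<in>S. g i s) t = (\<Sum>i\<in>S. frac_integral nu (g i) t)"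
  using g
proof (induction S rule: infinite_finite_induct)
  case (insert i S)
  then have "frac_integral nu (\<lambda>s. g i s + (\<Sum>i\<in>S. g i s)) t = frac_integral nu (g i) t + frac_integral nu (\<lambda>s. \<Sum>i\<in>S. g i s) t"
    by (intro frac_integral_add[OF nu t] continuous_on_sum) auto
  with insert show ?case by simp
qed (simp_all add: frac_integral_def)

lemma frac_integral_bound:
  fixes nu t e :: real and h :: "real \<Rightarrow> real"
  assumes nu: "nu > 0" and t: "t \<ge> 0" and h: "continuous_on {0..t} h"
    and bound: "\<And>s. s \<in> {0..t} \<Longrightarrow> \<bar>h s\<bar> \<le> e"
  shows "\<bar>frac_integral nu h t\<bar> \<le> e * (t powr nu / nu) / Gamma nu"
proof -
  have kernel: "((\<lambda>s. (t - s) powr (nu - 1) * e) has_integral (t - 0) powr nu / nu * e) {0..t}"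
    using has_integral_mult_left[OF powr_kernel_has_integral[OF nu t]] .
  have "norm (integral {0..t} (\<lambda>s. (t - s) powr (nu - 1) * h s)) \<le> integral {0..t} (\<lambda>s. (t - s) powr (nu - 1) * e)"
  proof (rule integral_norm_bound_integral[OF powr_kernel_mult_integrable[OF nu t h]])
    show "(\<lambda>s. (t - s) powr (nu - 1) * e) integrable_on {0..t}" using kernel by blast
    fix s assume s: "s \<in> {0..t}"
    then show "norm ((t - s) powr (nu - 1) * h s) \<le> (t - s) powr (nu - 1) * e"
      using bound[OF s] by (simp add: abs_mult mult_left_mono)
  qed
  also have "\<dots> = t powr nu / nu * e" using integral_unique[OF kernel] by simp
  finally have "\<bar>integral {0..t} (\<lambda>s. (t - s) powr (nu - 1) * h s)\<bar> / Gamma nu \<le> (t powr nu / nu * e) / Gamma nu"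
    using nu by (intro divide_right_mono) auto
  then show ?thesis using nu by (simp add: frac_integral_def abs_div mult.commute)
qed

lemma frac_integral_sums:
  fixes nu t :: real and g :: "nat \<Rightarrow> real \<Rightarrow> real"
  assumes nu: "nu > 0" and t: "t \<ge> 0" and g: "\<And>k. continuous_on {0..t} (g k)"
    and lim: "uniform_limit {0..t} (\<lambda>N s. \<Sum>k<N. g k s) G sequentially"
  shows "(\<lambda>k. frac_integral nu (g k) t) sums frac_integral nu G t"
  unfolding sums_def
proof (rule tendstoI)
  fix e :: real assume e: "e > 0"
  have partial: "continuous_on {0..t} (\<lambda>s. \<Sum>k<N. g k s)" for N by (intro continuous_on_sum g)
  have G: "continuous_on {0..t} G"
    using uniform_limit_theorem[OF _ lim] partial by simp
  define kappa where "kappa = t powr nu / nu / Gamma nu + 1"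
  have kappa: "kappa > 0" "t powr nu / nu / Gamma nu < kappa"
    using nu unfolding kappa_def by (auto intro: add_nonneg_pos)
  have "\<forall>\<^sub>F N in sequentially. \<forall>s\<in>{0..t}. dist (\<Sum>k<N. g k s) (G s) < e / kappa"
    using uniform_limitD[OF lim] e kappa by simp
  then show "\<forall>\<^sub>F N in sequentially. dist (\<Sum>k<N. frac_integral nu (g k) t) (frac_integral nu G t) < e"
  proof eventually_elim
    case (elim N)
    have "dist (\<Sum>k<N. frac_integral nu (g k) t) (frac_integral nu G t)
        = \<bar>frac_integral nu (\<lambda>s. (\<Sum>k<N. g k s) - G s) t\<bar>"
      using frac_integral_sum[OF nu t, where S = "{..<N}" and g = g] g frac_integral_diff[OF nu t partial G]
      by (simp add: dist_real_def)
    also have "\<dots> \<le> e / kappa * (t powr nu / nu) / Gamma nu"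
      using elim by (intro frac_integral_bound[OF nu t]) (auto intro!: continuous_on_diff partial G less_imp_le simp: dist_real_def)
    also have "\<dots> = e * ((t powr nu / nu / Gamma nu) / kappa)" by simp
    also have "\<dots> < e * 1"
    proof (rule mult_strict_left_mono[OF _ e])
      show "t powr nu / nu / Gamma nu / kappa < 1" using kappa by (simp only: divide_less_eq) simp
    qed
    finally show ?case by simp
  qed
qed

text \<open>The case split is needed because \<open>0 powr 0 = 0\<close>.\<close>
definition gamma_power :: "real \<Rightarrow> real \<Rightarrow> real" where
  "gamma_power a t = (if a = 0 then 1 else t powr a / Gamma (1 + a))"

lemma continuous_on_gamma_power:
  assumes "a \<ge> 0"
  shows "continuous_on {0..} (gamma_power a)"
proof -
  have "Gamma (1 + a) \<noteq> 0" using Gamma_real_pos[of "1 + a"] assms by linarith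
  then have "continuous_on {0..} (\<lambda>t. t powr a / Gamma (1 + a))" if "a \<noteq> 0"
    using assms that by (intro continuous_on_divide continuous_on_powr' continuous_intros) auto
  then show ?thesis unfolding gamma_power_def by (cases "a = 0") simp_all
qed

lemma frac_integral_gamma_power:
  fixes nu a t :: real
  assumes nu: "nu > 0" and a: "a \<ge> 0" and t: "t \<ge> 0"
  shows "frac_integral nu (gamma_power a) t = gamma_power (a + nu) t"
proof (cases "t = 0")
  case True
  then show ?thesis using nu a by (simp add: frac_integral_def gamma_power_def)
next
  case False
  then have t: "t > 0" using t by simp
  have Gamma_nu: "Gamma nu > 0" using nu by simp
  show ?thesis
  proof (cases "a = 0")
    case True
    have one: "gamma_power 0 = (\<lambda>_. 1)" by (simp add: gamma_power_def fun_eq_iff)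
    have "((\<lambda>s. (t - s) powr (nu - 1) * 1) has_integral t powr nu / nu) {0..t}"
      using powr_kernel_has_integral[OF nu, of 0 t] t by simp
    then have "frac_integral nu (gamma_power a) t = t powr nu / (nu * Gamma nu)"
      using True one by (simp add: frac_integral_def integral_unique)
    also have "nu * Gamma nu = Gamma (1 + nu)"
      using Gamma_plus1[of nu] nu by (auto simp: add.commute nonpos_Ints_def)
    finally show ?thesis using True nu one by (simp add: gamma_power_def)
  next
    case False
    then have a: "a > 0" using a by simp
    have "((\<lambda>s. (s - 0) powr (a + 1 - 1) * (t - s) powr (nu - 1)) has_integral
            (t - 0) powr (a + 1 + nu - 1) * Beta (a + 1) nu) {0..t}"
      by (rule Beta_has_integral_interval) (use a nu t in auto)
    then have "((\<lambda>s. (t - s) powr (nu - 1) * gamma_power a s) has_integral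
            t powr (a + nu) * Beta (a + 1) nu / Gamma (1 + a)) {0..t}"
      using a by (auto simp: gamma_power_def mult.commute intro: has_integral_divide)
    then have "frac_integral nu (gamma_power a) t = t powr (a + nu) * Beta (a + 1) nu / Gamma (1 + a) / Gamma nu"
      by (simp add: frac_integral_def integral_unique)
    also have "\<dots> = t powr (a + nu) / Gamma (1 + (a + nu))"
    proof -
      have "Gamma (1 + a) > 0" using a by simp
      with Gamma_nu show ?thesis
        by (simp add: Beta_altdef rGamma_inverse_Gamma add.commute add.left_commute field_simps)
    qed
    finally show ?thesis using a nu by (simp add: gamma_power_def)
  qed
qed

lemma frac_integral_sum_gamma_power:
  fixes nu t :: real and S :: "'i set" and c a :: "'i \<Rightarrow> real"
  assumes nu: "nu > 0" and t: "t \<ge> 0" and a: "\<And>i. i \<in> S \<Longrightarrow> a i \<ge> 0"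
  shows "frac_integral nu (\<lambda>s. \<Sum>i\<in>S. c i * gamma_power (a i) s) t = (\<Sum>i\<in>S. c i * gamma_power (a i + nu) t)"
proof -
  have "continuous_on {0..t} (\<lambda>s. c i * gamma_power (a i) s)" if "i \<in> S" for i
    using continuous_on_gamma_power[OF a[OF that]]
    by (intro continuous_intros) (auto intro: continuous_on_subset)
  then have "frac_integral nu (\<lambda>s. \<Sum>i\<in>S. c i * gamma_power (a i) s) t
      = (\<Sum>i\<in>S. c i * frac_integral nu (gamma_power (a i)) t)"
    by (simp add: frac_integral_sum[OF nu t] frac_integral_cmult)
  then show ?thesis using frac_integral_gamma_power[OF nu a t] by simp
qed

lemma Gamma_ge_fact_floor:
  fixes a :: real
  assumes a: "a \<ge> 0"
  shows "fact (nat \<lfloor>a\<rfloor>) / 2 \<le> Gamma (1 + a)"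
proof -
  define m where "m = nat \<lfloor>a\<rfloor>"
  have ma: "real m \<le> a" "a < real m + 1" using a unfolding m_def by linarith+
  have "Gamma (2 + real m) = fact (Suc m)"
    using Gamma_fact[of "Suc m"] by (simp add: add.commute)
  then have "fact (Suc m) = Gamma (2 + real m)" ..
  also have "\<dots> \<le> Gamma (2 + a)"
    using ma Gamma_real_strict_mono[of "2 + real m" "2 + a"] by (cases "a = real m") auto
  also have "\<dots> = (1 + a) * Gamma (1 + a)"
    using Gamma_plus1[of "1 + a"] a by (auto simp: add_ac nonpos_Ints_def)
  also have "\<dots> \<le> (real m + 2) * Gamma (1 + a)"
    using ma a by (intro mult_right_mono) auto
  finally have "real (Suc m) * fact m \<le> (real m + 2) * Gamma (1 + a)" by simp
  moreover have "(real m + 2) * (fact m / 2) \<le> real (Suc m) * fact m"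
    by (simp add: field_simps)
  ultimately have "(real m + 2) * (fact m / 2) \<le> (real m + 2) * Gamma (1 + a)" by linarith
  then show ?thesis
    unfolding m_def[symmetric] by (simp add: mult_le_cancel_left_pos)
qed

lemma power_div_fact_le_exp:
  fixes x :: real
  assumes "x \<ge> 0"
  shows "x ^ m / fact m \<le> exp x"
proof -
  have sums: "(\<lambda>n. x ^ n / fact n) sums exp x"
    using exp_converges[of x] by (simp add: divide_inverse mult.commute scaleR_conv_of_real)
  have "(\<Sum>n\<in>{m}. x ^ n / fact n) \<le> (\<Sum>n. x ^ n / fact n)"
    by (rule sum_le_suminf) (use sums assms in \<open>auto simp: sums_iff\<close>)
  then show ?thesis using sums by (simp add: sums_iff)
qed

text \<open>With \<open>x\<close> large, the right-hand side decays geometrically in \<open>k\<close>, whatever the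
  growth of \<open>R\<^sup>k\<close>; this is what makes the series solution converge.\<close>
lemma abs_gamma_power_le:
  fixes mu x R t a :: real and k :: nat
  assumes mu: "mu > 0" and x: "x \<ge> 1" and R: "R \<ge> 1" and t: "0 \<le> t" "t \<le> R"
    and a: "mu * real k \<le> a" "a \<le> real k"
  shows "\<bar>gamma_power a t\<bar> \<le> R ^ k * (2 * exp x * x) * (x powr (- mu)) ^ k"
proof (cases "a = 0")
  case True
  then have "k = 0" using a mu by (simp add: mult_le_0_iff)
  moreover have "1 * 1 \<le> exp x * x" using x by (intro mult_mono) auto
  ultimately show ?thesis using True by (simp add: gamma_power_def)
next
  case False
  then have a_pos: "a > 0" using a mu by (smt (verit) mult_nonneg_nonneg of_nat_0_le_iff)
  define m where "m = nat \<lfloor>a\<rfloor>"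
  have Gamma_pos: "Gamma (1 + a) > 0" using a_pos by simp
  have "t powr a \<le> R powr a" using t a_pos by (intro powr_mono2) auto
  also have "\<dots> \<le> R powr real k" using R a by (intro powr_mono) auto
  finally have tp: "t powr a \<le> R ^ k" using R by (simp add: powr_realpow)
  have xm: "1 / x ^ m \<le> x * (x powr (- mu)) ^ k"
  proof -
    have "x powr (mu * real k - 1) \<le> x powr real m"
      using x a unfolding m_def by (intro powr_mono) linarith+
    then have "1 / x ^ m \<le> 1 / x powr (mu * real k - 1)"
      using x by (intro divide_left_mono) (auto simp: powr_realpow)
    also have "\<dots> = x powr (- (mu * real k - 1))"
      by (metis powr_minus_divide)
    also have "\<dots> = x powr 1 * x powr (- mu * real k)"
      by (simp only: powr_add[symmetric]) (simp add: algebra_simps)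
    also have "\<dots> = x * (x powr (- mu)) ^ k"
      using x by (simp add: powr_realpow[symmetric] powr_powr)
    finally show ?thesis .
  qed
  have "1 / Gamma (1 + a) \<le> 1 / (fact m / 2)"
    using Gamma_ge_fact_floor[of a] a_pos by (intro divide_left_mono) (auto simp: m_def)
  also have "\<dots> = 2 / fact m" by simp
  also have "\<dots> \<le> 2 * (exp x * (1 / x ^ m))"
    using power_div_fact_le_exp[of x m] x by (simp add: field_simps)
  also have "\<dots> \<le> 2 * (exp x * (x * (x powr (- mu)) ^ k))"
    using xm by (intro mult_left_mono) auto
  finally have "1 / Gamma (1 + a) \<le> 2 * exp x * x * (x powr (- mu)) ^ k" by (simp add: mult_ac)
  then have "t powr a * (1 / Gamma (1 + a)) \<le> R ^ k * (2 * exp x * x * (x powr (- mu)) ^ k)"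
    using tp Gamma_pos R by (intro mult_mono) auto
  then show ?thesis using False Gamma_pos by (simp add: gamma_power_def mult_ac)
qed

section \<open>Uniqueness for the homogeneous Abel--Volterra equation\<close>

lemma abs_powr_kernel_integral_le:
  fixes nu a s M :: real and d :: "real \<Rightarrow> real"
  assumes nu: "nu > 0" and a: "0 \<le> a" "a \<le> s" and d: "continuous_on {0..s} d"
    and zero: "\<And>u. u \<in> {0..a} \<Longrightarrow> d u = 0" and bound: "\<And>u. u \<in> {a..s} \<Longrightarrow> \<bar>d u\<bar> \<le> M"
  shows "\<bar>integral {0..s} (\<lambda>u. (s - u) powr (nu - 1) * d u)\<bar> \<le> (s - a) powr nu / nu * M"
proof -
  have int: "(\<lambda>u. (s - u) powr (nu - 1) * d u) integrable_on {0..s}"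
    using a by (intro powr_kernel_mult_integrable[OF nu _ d]) auto
  have "integral {0..s} (\<lambda>u. (s - u) powr (nu - 1) * d u)
      = integral {0..a} (\<lambda>u. (s - u) powr (nu - 1) * d u) + integral {a..s} (\<lambda>u. (s - u) powr (nu - 1) * d u)"
    using Henstock_Kurzweil_Integration.integral_combine[OF _ _ int, of a] a by auto
  also have "integral {0..a} (\<lambda>u. (s - u) powr (nu - 1) * d u) = integral {0..a} (\<lambda>_. 0)"
    by (rule integral_cong) (simp add: zero)
  finally have split: "integral {0..s} (\<lambda>u. (s - u) powr (nu - 1) * d u) = integral {a..s} (\<lambda>u. (s - u) powr (nu - 1) * d u)"
    by simp
  have kernel: "((\<lambda>u. (s - u) powr (nu - 1) * M) has_integral (s - a) powr nu / nu * M) {a..s}"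
    using has_integral_mult_left[OF powr_kernel_has_integral[OF nu a(2)]] .
  have "norm (integral {a..s} (\<lambda>u. (s - u) powr (nu - 1) * d u)) \<le> integral {a..s} (\<lambda>u. (s - u) powr (nu - 1) * M)"
  proof (rule integral_norm_bound_integral)
    show "(\<lambda>u. (s - u) powr (nu - 1) * d u) integrable_on {a..s}"
      by (rule integrable_on_subinterval[OF int]) (use a in auto)
    show "(\<lambda>u. (s - u) powr (nu - 1) * M) integrable_on {a..s}" using kernel by blast
    fix u assume "u \<in> {a..s}"
    then show "norm ((s - u) powr (nu - 1) * d u) \<le> (s - u) powr (nu - 1) * M"
      using bound by (simp add: abs_mult mult_left_mono)
  qed
  then show ?thesis using integral_unique[OF kernel] unfolding split by simp
qed

text \<open>On an interval of length \<open>h\<close> with \<open>|C| h\<^sup>\<nu> / \<nu> \<le> 1/2\<close> the maximum of \<open>|d|\<close> is at most half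
  of itself; stepping along such intervals shows \<open>d = 0\<close>.\<close>
lemma volterra_homogeneous_eq_zero:
  fixes nu C :: real and d :: "real \<Rightarrow> real"
  assumes nu: "nu > 0" and d: "\<And>R. R \<ge> 0 \<Longrightarrow> continuous_on {0..R} d"
    and eq: "\<And>t. t \<ge> 0 \<Longrightarrow> d t = C * integral {0..t} (\<lambda>s. (t - s) powr (nu - 1) * d s)"
    and t: "t \<ge> 0"
  shows "d t = 0"
proof -
  define A where "A = \<bar>C\<bar> + 1"
  have A: "A > 0" by (simp add: A_def)
  define h where "h = (nu / (2 * A)) powr (1 / nu)"
  have h: "h > 0" using A nu by (simp add: h_def)
  have hnu: "h powr nu = nu / (2 * A)"
    using A nu by (simp add: h_def powr_powr)
  have vanish: "\<forall>s\<in>{0..real m * h}. d s = 0" for m :: nat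
  proof (induction m)
    case 0
    then show ?case using eq[of 0] by simp
  next
    case (Suc m)
    define a where "a = real m * h"
    define b where "b = real (Suc m) * h"
    have ab: "0 \<le> a" "a \<le> b" "b - a = h" using h by (auto simp: a_def b_def algebra_simps)
    have "continuous_on {a..b} (\<lambda>s. \<bar>d s\<bar>)"
      using ab by (intro continuous_intros continuous_on_subset[OF d[of b]]) auto
    then obtain sm where sm: "sm \<in> {a..b}" and smax: "\<And>s. s \<in> {a..b} \<Longrightarrow> \<bar>d s\<bar> \<le> \<bar>d sm\<bar>"
      using continuous_attains_sup[of "{a..b}" "\<lambda>s. \<bar>d s\<bar>"] ab by auto
    define M where "M = \<bar>d sm\<bar>"
    have half: "\<bar>d s\<bar> \<le> M / 2" if s: "s \<in> {a..b}" for s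
    proof -
      have s: "s \<ge> 0" "a \<le> s" "s \<le> b" using s ab by auto
      have "\<bar>integral {0..s} (\<lambda>u. (s - u) powr (nu - 1) * d u)\<bar> \<le> (s - a) powr nu / nu * M"
      proof (rule abs_powr_kernel_integral_le[OF nu ab(1) s(2) continuous_on_subset[OF d[of s]]])
        show "d u = 0" if "u \<in> {0..a}" for u using Suc.IH that by (auto simp: a_def)
        show "\<bar>d u\<bar> \<le> M" if "u \<in> {a..s}" for u unfolding M_def using that s by (intro smax) auto
      qed (use s in auto)
      also have "\<dots> \<le> h powr nu / nu * M"
        using s ab nu by (intro mult_right_mono divide_right_mono powr_mono2) (auto simp: M_def)
      finally have bound: "\<bar>integral {0..s} (\<lambda>u. (s - u) powr (nu - 1) * d u)\<bar> \<le> h powr nu / nu * M" .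
      have "\<bar>d s\<bar> = \<bar>C\<bar> * \<bar>integral {0..s} (\<lambda>u. (s - u) powr (nu - 1) * d u)\<bar>"
        using eq[OF s(1)] by (simp add: abs_mult)
      also have "\<dots> \<le> A * (h powr nu / nu * M)"
        using bound by (intro mult_mono) (auto simp: A_def intro: order.trans[OF abs_ge_zero bound])
      also have "\<dots> = M / 2" using A nu by (simp add: hnu)
      finally show ?thesis .
    qed
    have "M \<le> 0" using half[OF sm] by (simp add: M_def)
    then have "\<forall>s\<in>{a..b}. d s = 0" using smax by (force simp: M_def)
    then show ?case using Suc.IH by (auto simp: a_def b_def not_le)
  qed
  have "t / h \<le> real (nat \<lceil>t / h\<rceil>)" by linarith
  then have "t \<le> real (nat \<lceil>t / h\<rceil>) * h" using h by (simp add: divide_le_eq)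
  then show ?thesis using vanish t by auto
qed

lemma volterra_linear_eq_unique:
  fixes v c a t :: real and f g r :: "real \<Rightarrow> real"
  assumes v: "v > 0" and f: "\<And>R. continuous_on {0..R} f" and g: "\<And>R. continuous_on {0..R} g"
    and r: "continuous_on {0..} r"
    and f_eq: "\<And>s. s \<ge> 0 \<Longrightarrow> f s = c + frac_integral v (\<lambda>x. a * f x + r x) s"
    and g_eq: "\<And>s. s \<ge> 0 \<Longrightarrow> g s = c + frac_integral v (\<lambda>x. a * g x + r x) s"
    and t: "t \<ge> 0"
  shows "f t = g t"
proof -
  define d where "d = (\<lambda>s. f s - g s)"
  have d: "continuous_on {0..R} d" for R unfolding d_def by (intro continuous_on_diff f g)
  have "d s = (a / Gamma v) * integral {0..s} (\<lambda>x. (s - x) powr (v - 1) * d x)" if s: "s \<ge> 0" for s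
  proof -
    have "d s = frac_integral v (\<lambda>x. a * f x + r x) s - frac_integral v (\<lambda>x. a * g x + r x) s"
      using f_eq[OF s] g_eq[OF s] by (simp add: d_def)
    also have "\<dots> = frac_integral v (\<lambda>x. (a * f x + r x) - (a * g x + r x)) s"
      using f g continuous_on_subset[OF r]
      by (intro frac_integral_diff[OF v s, symmetric] continuous_intros) auto
    also have "\<dots> = frac_integral v (\<lambda>x. a * d x) s" by (simp add: d_def algebra_simps)
    also have "\<dots> = a * frac_integral v d s" by (rule frac_integral_cmult)
    finally show ?thesis by (simp add: frac_integral_def)
  qed
  then have "d t = 0" by (rule volterra_homogeneous_eq_zero[OF v d _ t])
  then show ?thesis by (simp add: d_def)
qed

section \<open>From the Caputo equation to an integral equation\<close>

text \<open>On \<open>(0, \<infinity>)\<close> the derivative is the pointwise limit of the measurable difference quotients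
  \<open>n (f (s + 1/n) - f s)\<close>.\<close>
lemma borel_measurable_deriv_extension:
  fixes f :: "real \<Rightarrow> real"
  assumes fcont: "continuous_on {0..} f" and fdiff: "\<And>t. t > 0 \<Longrightarrow> f differentiable (at t)"
  shows "(\<lambda>s. if 0 < s then deriv f s else deriv f 0) \<in> borel_measurable borel"
proof -
  define F where "F = (\<lambda>s::real. if s \<in> {0..} then f s else 0)"
  have F[measurable]: "F \<in> borel_measurable borel"
    unfolding F_def by (rule borel_measurable_continuous_on_if) (auto intro: fcont)
  define A where "A = (\<lambda>(n::nat) s. if 0 < s then (F (s + 1 / real (Suc n)) - F s) * real (Suc n) else deriv f 0)"
  show ?thesis
  proof (rule borel_measurable_LIMSEQ_real[where u = A])
    show "A i \<in> borel_measurable borel" for i unfolding A_def by measurable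
    fix s :: real
    show "(\<lambda>i. A i s) \<longlonglongrightarrow> (if 0 < s then deriv f s else deriv f 0)"
    proof (cases "0 < s")
      case False then show ?thesis by (simp add: A_def)
    next
      case True
      have "(f has_real_derivative deriv f s) (at s)"
        using fdiff[OF True] by (simp add: DERIV_deriv_iff_real_differentiable)
      then have lim: "((\<lambda>y. (f y - f s) / (y - s)) \<longlongrightarrow> deriv f s) (at s)"
        by (simp add: has_field_derivative_iff)
      have "(\<lambda>n. s + 1 / real (Suc n)) \<longlonglongrightarrow> s + 0"
        by (intro tendsto_intros LIMSEQ_Suc[OF lim_const_over_n])
      then have "filterlim (\<lambda>n. s + 1 / real (Suc n)) (at s) sequentially"
        by (simp add: filterlim_at)
      from filterlim_compose[OF lim this]
      have "(\<lambda>n. (f (s + 1 / real (Suc n)) - f s) / (s + 1 / real (Suc n) - s)) \<longlonglongrightarrow> deriv f s"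
        by simp
      moreover have "(f (s + 1 / real (Suc n)) - f s) / (s + 1 / real (Suc n) - s) = A n s" for n
        using True by (simp add: A_def F_def)
      ultimately show ?thesis using True by simp
    qed
  qed
qed

lemma lborel_if_absolutely_integrable:
  fixes f :: "real \<Rightarrow> real" and S :: "real set"
  assumes m: "(\<lambda>x. if x \<in> S then f x else 0) \<in> borel_measurable borel"
    and ai: "f absolutely_integrable_on S"
  shows "integrable lborel (\<lambda>x. if x \<in> S then f x else 0)"
    "integral\<^sup>L lborel (\<lambda>x. if x \<in> S then f x else 0) = integral S f"
proof -
  have e: "(\<lambda>x. indicator S x *\<^sub>R f x) = (\<lambda>x. if x \<in> S then f x else 0)"
    by (auto simp: indicator_def)
  have m': "(\<lambda>x. if x \<in> S then f x else 0) \<in> borel_measurable lborel" using m by simp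
  have "integrable lebesgue (\<lambda>x. if x \<in> S then f x else 0)"
    using ai unfolding set_integrable_def e .
  then show "integrable lborel (\<lambda>x. if x \<in> S then f x else 0)"
    using integrable_completion[OF m'] by simp
  have "integral\<^sup>L lborel (\<lambda>x. if x \<in> S then f x else 0) = integral\<^sup>L lebesgue (\<lambda>x. if x \<in> S then f x else 0)"
    using integral_completion[OF m'] by simp
  also have "\<dots> = set_lebesgue_integral lebesgue S f"
    unfolding set_lebesgue_integral_def e ..
  also have "\<dots> = integral S f" by (rule set_lebesgue_integral_eq_integral(2)[OF ai])
  finally show "integral\<^sup>L lborel (\<lambda>x. if x \<in> S then f x else 0) = integral S f" .
qed

lemma Abel_kernel_lborel:
  fixes nu u T :: real
  assumes nu: "0 < nu" "nu < 1" and uT: "u < T"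
  shows "integrable lborel (\<lambda>s. if s \<in> {u..T} then (T - s) powr (nu - 1) * (s - u) powr (- nu) else 0)"
    "(\<integral>s. (if s \<in> {u..T} then (T - s) powr (nu - 1) * (s - u) powr (- nu) else 0) \<partial>lborel) = Beta (1 - nu) nu"
proof -
  have "((\<lambda>s. (s - u) powr ((1 - nu) - 1) * (T - s) powr (nu - 1)) has_integral
          (T - u) powr ((1 - nu) + nu - 1) * Beta (1 - nu) nu) {u..T}"
    by (rule Beta_has_integral_interval) (use nu uT in auto)
  then have hi: "((\<lambda>s. (T - s) powr (nu - 1) * (s - u) powr (- nu)) has_integral Beta (1 - nu) nu) {u..T}"
    using uT by (simp add: mult.commute)
  then have ai: "(\<lambda>s. (T - s) powr (nu - 1) * (s - u) powr (- nu)) absolutely_integrable_on {u..T}"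
    by (intro nonnegative_absolutely_integrable_1) auto
  have m: "(\<lambda>s. if s \<in> {u..T} then (T - s) powr (nu - 1) * (s - u) powr (- nu) else 0) \<in> borel_measurable borel"
    by measurable
  show "integrable lborel (\<lambda>s. if s \<in> {u..T} then (T - s) powr (nu - 1) * (s - u) powr (- nu) else 0)"
    by (rule lborel_if_absolutely_integrable(1)[OF m ai])
  show "(\<integral>s. (if s \<in> {u..T} then (T - s) powr (nu - 1) * (s - u) powr (- nu) else 0) \<partial>lborel) = Beta (1 - nu) nu"
    using lborel_if_absolutely_integrable(2)[OF m ai] hi by (simp add: integral_unique)
qed

lemma absolutely_integrable_of_Abel_weighted:
  fixes nu T :: real and D :: "real \<Rightarrow> real"
  assumes nu: "nu > 0" and DT: "(\<lambda>s. (T - s) powr (- nu) * D s) absolutely_integrable_on {0..T}"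
  shows "D absolutely_integrable_on {0..T}"
proof (rule absolutely_integrable_spike[OF _ negligible_sing[of T]])
  show "(\<lambda>s. (T - s) powr nu * ((T - s) powr (- nu) * D s)) absolutely_integrable_on {0..T}"
  proof (rule absolutely_integrable_bounded_measurable_product_real[OF _ _ _ DT])
    have "continuous_on {0..T} (\<lambda>s. (T - s) powr nu)"
      using nu by (intro continuous_on_powr' continuous_intros) auto
    then show "(\<lambda>s. (T - s) powr nu) \<in> borel_measurable (lebesgue_on {0..T})"
      "bounded ((\<lambda>s. (T - s) powr nu) ` {0..T})"
      by (auto intro: continuous_imp_measurable_on_sets_lebesgue compact_imp_bounded compact_continuous_image)
  qed auto
  show "D s = (T - s) powr nu * ((T - s) powr (- nu) * D s)" if "s \<in> {0..T} - {T}" for s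
    using that by (simp add: powr_minus)
qed

lemma deriv_has_integral:
  fixes f :: "real \<Rightarrow> real"
  assumes fcont: "continuous_on {0..} f" and fdiff: "\<And>s. s > 0 \<Longrightarrow> f differentiable (at s)"
    and T: "T > 0"
  shows "(deriv f has_integral f T - f 0) {0..T}"
proof (rule fundamental_theorem_of_calculus_interior)
  show "continuous_on {0..T} f" by (rule continuous_on_subset[OF fcont]) auto
  fix x assume "x \<in> {0<..<T}"
  then show "(f has_vector_derivative deriv f x) (at x)"
    using fdiff[of x] by (auto simp: DERIV_deriv_iff_real_differentiable
        has_real_derivative_iff_has_vector_derivative[symmetric])
qed (use T in auto)

text \<open>Tonelli--Fubini for the two Abel kernels: integrating \<open>(T - s)\<^sup>\<nu>\<^sup>-\<^sup>1 (s - u)\<^sup>-\<^sup>\<nu>\<close> over \<open>s \<in> [u, T]\<close>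
  gives the constant \<open>B(1 - \<nu>, \<nu>)\<close>.\<close>
lemma Abel_Fubini:
  fixes nu T :: real and D :: "real \<Rightarrow> real"
  assumes nu: "0 < nu" "nu < 1" and D[measurable]: "D \<in> borel_measurable borel"
    and DI: "integrable lborel (\<lambda>u. if u \<in> {0..T} then D u else 0)"
  shows "(\<integral>s. (\<integral>u. (if 0 \<le> u \<and> u \<le> s \<and> s \<le> T then (T - s) powr (nu - 1) * ((s - u) powr (- nu) * D u) else 0) \<partial>lborel) \<partial>lborel)
    = Beta (1 - nu) nu * (\<integral>u. (if u \<in> {0..T} then D u else 0) \<partial>lborel)"
proof -
  define B where "B = Beta (1 - nu) nu"
  define K where "K = (\<lambda>u s. if s \<in> {u..T} then (T - s) powr (nu - 1) * (s - u) powr (- nu) else 0)"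
  define F where "F = (\<lambda>u s. if 0 \<le> u \<and> u \<le> s \<and> s \<le> T then (T - s) powr (nu - 1) * ((s - u) powr (- nu) * D u) else 0)"
  have F_measurable: "case_prod F \<in> borel_measurable (lborel \<Otimes>\<^sub>M lborel)"
    unfolding F_def by measurable
  have B: "B \<ge> 0" using nu by (simp add: B_def Beta_def)
  have F_eq: "F u s = (if 0 \<le> u \<and> u < T then D u * K u s else 0)" for u s
    by (cases "u = T") (auto simp: F_def K_def)
  have F_fun: "F u = (if 0 \<le> u \<and> u < T then (\<lambda>s. D u * K u s) else (\<lambda>_. 0))" for u
    by (auto simp: F_eq fun_eq_iff)
  have F_integrable: "integrable lborel (F u)" for u
    using Abel_kernel_lborel(1)[OF nu, of u T] unfolding F_fun K_def by auto
  have F_integral: "(\<integral>s. F u s \<partial>lborel) = (if 0 \<le> u \<and> u < T then D u * B else 0)" for u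
    using Abel_kernel_lborel(2)[OF nu, of u T] unfolding F_fun K_def B_def by auto
  have F_norm_integral: "(\<integral>s. norm (F u s) \<partial>lborel) = (if 0 \<le> u \<and> u < T then \<bar>D u\<bar> * B else 0)" for u
  proof -
    have "(\<lambda>s. norm (F u s)) = (if 0 \<le> u \<and> u < T then (\<lambda>s. \<bar>D u\<bar> * K u s) else (\<lambda>_. 0))"
      unfolding F_fun K_def by (auto simp: abs_mult fun_eq_iff)
    then show ?thesis using Abel_kernel_lborel(2)[OF nu, of u T] unfolding K_def B_def by auto
  qed
  have "integrable lborel (\<lambda>u. \<integral>s. norm (F u s) \<partial>lborel)"
    unfolding F_norm_integral
  proof (rule Bochner_Integration.integrable_bound)
    show "integrable lborel (\<lambda>u. B * norm (if u \<in> {0..T} then D u else 0))"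
      using DI by (intro integrable_mult_right integrable_norm)
    show "(\<lambda>u. if 0 \<le> u \<and> u < T then \<bar>D u\<bar> * B else 0) \<in> borel_measurable lborel" by measurable
    show "AE u in lborel. norm (if 0 \<le> u \<and> u < T then \<bar>D u\<bar> * B else 0) \<le> norm (B * norm (if u \<in> {0..T} then D u else 0))"
      using B by (intro AE_I2) (auto simp: abs_mult)
  qed
  then have "integrable (lborel \<Otimes>\<^sub>M lborel) (case_prod F)"
    by (intro lborel_pair.Fubini_integrable[OF F_measurable]) (auto intro: F_integrable)
  then have "(\<integral>s. (\<integral>u. F u s \<partial>lborel) \<partial>lborel) = (\<integral>u. (\<integral>s. F u s \<partial>lborel) \<partial>lborel)"
    by (rule lborel_pair.Fubini_integral)
  also have "\<dots> = (\<integral>u. B * (if u \<in> {0..T} then D u else 0) \<partial>lborel)"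
    unfolding F_integral
  proof (rule integral_cong_AE)
    show "AE u in lborel. (if 0 \<le> u \<and> u < T then D u * B else 0) = B * (if u \<in> {0..T} then D u else 0)"
      using AE_lborel_singleton[of T] by eventually_elim auto
  qed measurable
  finally show ?thesis by (simp add: F_def B_def)
qed

lemma lborel_integral_powr_kernel:
  fixes nu T :: real and h :: "real \<Rightarrow> real"
  assumes nu: "nu > 0" and T: "T \<ge> 0" and h: "continuous_on {0..T} h"
  shows "(\<integral>s. (if 0 < s \<and> s \<le> T then (T - s) powr (nu - 1) * h s else 0) \<partial>lborel)
    = integral {0..T} (\<lambda>s. (T - s) powr (nu - 1) * h s)"
proof -
  have h_measurable: "(\<lambda>s. if s \<in> {0..T} then h s else 0) \<in> borel_measurable borel"
    by (rule borel_measurable_continuous_on_if) (use h in auto)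
  have "(\<lambda>s. (T - s) powr (nu - 1) * (if s \<in> {0..T} then h s else 0)) \<in> borel_measurable borel"
    using h_measurable by measurable
  moreover have "(\<lambda>s. (T - s) powr (nu - 1) * (if s \<in> {0..T} then h s else 0))
      = (\<lambda>s. if s \<in> {0..T} then (T - s) powr (nu - 1) * h s else 0)"
    by auto
  ultimately have measurable: "(\<lambda>s. if s \<in> {0..T} then (T - s) powr (nu - 1) * h s else 0) \<in> borel_measurable borel"
    by simp
  have "(\<integral>s. (if 0 < s \<and> s \<le> T then (T - s) powr (nu - 1) * h s else 0) \<partial>lborel)
      = (\<integral>s. (if s \<in> {0..T} then (T - s) powr (nu - 1) * h s else 0) \<partial>lborel)"
  proof (rule integral_cong_AE)
    have "(\<lambda>s. (if 0 < s \<and> s \<le> T then 1 else 0) * (if s \<in> {0..T} then (T - s) powr (nu - 1) * h s else 0))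
        \<in> borel_measurable lborel"
      using measurable by measurable
    moreover have "(\<lambda>s. (if 0 < s \<and> s \<le> T then 1 else 0) * (if s \<in> {0..T} then (T - s) powr (nu - 1) * h s else 0))
        = (\<lambda>s. if 0 < s \<and> s \<le> T then (T - s) powr (nu - 1) * h s else 0)"
      by auto
    ultimately show "(\<lambda>s. if 0 < s \<and> s \<le> T then (T - s) powr (nu - 1) * h s else 0) \<in> borel_measurable lborel"
      by simp
    show "(\<lambda>s. if s \<in> {0..T} then (T - s) powr (nu - 1) * h s else 0) \<in> borel_measurable lborel"
      using measurable by simp
    show "AE s in lborel. (if 0 < s \<and> s \<le> T then (T - s) powr (nu - 1) * h s else 0)
        = (if s \<in> {0..T} then (T - s) powr (nu - 1) * h s else 0)"
      using AE_lborel_singleton[of 0] by eventually_elim auto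
  qed
  also have "\<dots> = integral {0..T} (\<lambda>s. (T - s) powr (nu - 1) * h s)"
    by (rule lborel_if_absolutely_integrable(2)[OF measurable powr_kernel_mult_absolutely_integrable[OF nu T h]])
  finally show ?thesis .
qed

lemma caputo_integral_equation:
  fixes nu T :: real and f g :: "real \<Rightarrow> real"
  assumes nu: "0 < nu" "nu < 1"
    and fcont: "continuous_on {0..} f"
    and fdiff: "\<And>t. t > 0 \<Longrightarrow> f differentiable (at t)"
    and fint: "\<And>t. t > 0 \<Longrightarrow> (\<lambda>s. (t - s) powr (- nu) * deriv f s) absolutely_integrable_on {0..t}"
    and gcont: "continuous_on {0..} g"
    and cap: "\<And>t. t > 0 \<Longrightarrow> integral {0..t} (\<lambda>s. (t - s) powr (- nu) * deriv f s) = Gamma (1 - nu) * g t"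
    and T: "T > 0"
  shows "integral {0..T} (\<lambda>s. (T - s) powr (nu - 1) * g s) = Gamma nu * (f T - f 0)"
proof -
  define D where "D = (\<lambda>s. if 0 < s then deriv f s else deriv f 0)"
  have D_measurable[measurable]: "D \<in> borel_measurable borel"
    unfolding D_def by (rule borel_measurable_deriv_extension[OF fcont fdiff])
  have D_eq: "D s = deriv f s" if "s \<ge> 0" for s using that by (cases "s = 0") (auto simp: D_def)
  have fint_D: "(\<lambda>u. (s - u) powr (- nu) * D u) absolutely_integrable_on {0..s}" if "s > 0" for s
    by (rule absolutely_integrable_spike[OF fint[OF that] negligible_empty]) (simp add: D_eq)
  have "D absolutely_integrable_on {0..T}"
    by (rule absolutely_integrable_of_Abel_weighted[OF nu(1) fint_D[OF T]])
  moreover have "(\<lambda>u. if u \<in> {0..T} then D u else 0) \<in> borel_measurable borel" by measurable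
  ultimately have DI: "integrable lborel (\<lambda>u. if u \<in> {0..T} then D u else 0)"
    and D_integral: "(\<integral>u. (if u \<in> {0..T} then D u else 0) \<partial>lborel) = integral {0..T} D"
    using lborel_if_absolutely_integrable by blast+
  have "(deriv f has_integral f T - f 0) {0..T}" by (rule deriv_has_integral[OF fcont fdiff T])
  then have "(D has_integral f T - f 0) {0..T}"
    by (rule has_integral_eq[rotated]) (simp add: D_eq)
  then have "integral {0..T} D = f T - f 0" by (rule integral_unique)
  then have rhs: "(\<integral>s. (\<integral>u. (if 0 \<le> u \<and> u \<le> s \<and> s \<le> T then (T - s) powr (nu - 1) * ((s - u) powr (- nu) * D u) else 0) \<partial>lborel) \<partial>lborel)
      = Gamma (1 - nu) * Gamma nu * (f T - f 0)"
    using Abel_Fubini[OF nu D_measurable DI] D_integral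
    by (simp add: Beta_altdef rGamma_inverse_Gamma)
  have inner: "(\<integral>u. (if 0 \<le> u \<and> u \<le> s \<and> s \<le> T then (T - s) powr (nu - 1) * ((s - u) powr (- nu) * D u) else 0) \<partial>lborel)
      = (if 0 < s \<and> s \<le> T then Gamma (1 - nu) * ((T - s) powr (nu - 1) * g s) else 0)" for s
  proof (cases "0 < s \<and> s \<le> T")
    case True
    have "(\<lambda>u. (T - s) powr (nu - 1) * ((s - u) powr (- nu) * D u)) absolutely_integrable_on {0..s}"
      using fint_D True by (intro set_integrable_mult_right) auto
    from lborel_if_absolutely_integrable(2)[OF _ this]
    have "(\<integral>u. (if u \<in> {0..s} then (T - s) powr (nu - 1) * ((s - u) powr (- nu) * D u) else 0) \<partial>lborel)
        = (T - s) powr (nu - 1) * integral {0..s} (\<lambda>u. (s - u) powr (- nu) * D u)"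
      by simp measurable
    also have "integral {0..s} (\<lambda>u. (s - u) powr (- nu) * D u) = integral {0..s} (\<lambda>u. (s - u) powr (- nu) * deriv f u)"
      by (rule integral_cong) (simp add: D_eq)
    finally show ?thesis using True cap[of s] by auto
  next
    case False
    then have "(\<lambda>u. if 0 \<le> u \<and> u \<le> s \<and> s \<le> T then (T - s) powr (nu - 1) * ((s - u) powr (- nu) * D u) else 0) = (\<lambda>_. 0)"
      by (auto simp: fun_eq_iff)
    with False show ?thesis by auto
  qed
  have "(\<integral>s. (\<integral>u. (if 0 \<le> u \<and> u \<le> s \<and> s \<le> T then (T - s) powr (nu - 1) * ((s - u) powr (- nu) * D u) else 0) \<partial>lborel) \<partial>lborel)
      = integral {0..T} (\<lambda>s. (T - s) powr (nu - 1) * (Gamma (1 - nu) * g s))"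
    unfolding inner mult.left_commute[of "Gamma (1 - nu)"]
    using nu T by (intro lborel_integral_powr_kernel continuous_intros continuous_on_subset[OF gcont]) auto
  also have "\<dots> = integral {0..T} (\<lambda>s. Gamma (1 - nu) *\<^sub>R ((T - s) powr (nu - 1) * g s))"
    by (simp add: mult.left_commute)
  also have "\<dots> = Gamma (1 - nu) * integral {0..T} (\<lambda>s. (T - s) powr (nu - 1) * g s)"
    by (subst integral_cmul) simp
  finally have "Gamma (1 - nu) * integral {0..T} (\<lambda>s. (T - s) powr (nu - 1) * g s) = Gamma (1 - nu) * (Gamma nu * (f T - f 0))"
    using rhs by (metis mult.assoc)
  moreover have "Gamma (1 - nu) > 0" using nu by simp
  ultimately show ?thesis by (metis less_irrefl mult_cancel_left)
qed

lemma caputo_eq_imp_frac_integral_eq: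
  fixes nu t :: real and f g :: "real \<Rightarrow> real"
  assumes nu: "0 < nu" "nu \<le> 1" and reg: "caputo_regular nu f" and g: "continuous_on {0..} g"
    and eq: "\<And>s. s > 0 \<Longrightarrow> caputo nu f s = g s" and t: "t \<ge> 0"
  shows "f t = f 0 + frac_integral nu g t"
proof (cases "t = 0")
  case True
  then show ?thesis by (simp add: frac_integral_def)
next
  case False
  then have t: "t > 0" using t by simp
  have fcont: "continuous_on {0..} f" and fdiff: "\<And>s. s > 0 \<Longrightarrow> f differentiable (at s)"
    using reg by (auto simp: caputo_regular_def)
  show ?thesis
  proof (cases "nu = 1")
    case True
    have "(deriv f has_integral f t - f 0) {0..t}" by (rule deriv_has_integral[OF fcont fdiff t])
    then have "((\<lambda>s. (t - s) powr (nu - 1) * g s) has_integral f t - f 0) {0..t}"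
      by (rule has_integral_spike_finite[where S = "{0, t}", rotated 2])
         (use True eq in \<open>auto simp: caputo_def\<close>)
    then show ?thesis using True by (simp add: frac_integral_def integral_unique)
  next
    case False
    then have nu1: "nu < 1" using nu by simp
    have "integral {0..t} (\<lambda>s. (t - s) powr (nu - 1) * g s) = Gamma nu * (f t - f 0)"
    proof (rule caputo_integral_equation[OF nu(1) nu1 fcont fdiff _ g _ t])
      show "(\<lambda>u. (s - u) powr (- nu) * deriv f u) absolutely_integrable_on {0..s}" if "s > 0" for s
        using reg nu1 that by (simp add: caputo_regular_def)
      show "integral {0..s} (\<lambda>u. (s - u) powr (- nu) * deriv f u) = Gamma (1 - nu) * g s" if "s > 0" for s
      proof -
        have "Gamma (1 - nu) > 0" using nu1 by simp
        then show ?thesis using eq[OF that] False by (simp add: caputo_def field_simps)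
      qed
    qed
    moreover have "Gamma nu > 0" using nu by simp
    ultimately show ?thesis by (simp add: frac_integral_def)
  qed
qed


section \<open>The index sets and the terms of the series\<close>

lemma length_Lambda_set: "ks \<in> Lambda_set n k \<Longrightarrow> length ks = n"
  by (simp add: Lambda_set_def)

lemma sum_nth_pred_eq_sum_list: "length ks = n \<Longrightarrow> (\<Sum>j=1..n. ks ! (j - 1)) = sum_list ks"
  by (simp add: sum.atLeast1_atMost_eq sum_list_sum_nth atLeast0LessThan)

lemma finite_Lambda_set: "finite (Lambda_set n k)"
  by (rule finite_subset[OF _ finite_lists_length_eq[OF finite_atLeastAtMost[of 0 k], of n]])
     (auto simp: Lambda_set_def intro: member_le_sum_list)

lemma card_Lambda_set_le: "card (Lambda_set n k) \<le> (k + 1) ^ n"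
proof -
  have "card (Lambda_set n k) \<le> card {xs. set xs \<subseteq> {0..k} \<and> length xs = n}"
    by (rule card_mono[OF finite_lists_length_eq[OF finite_atLeastAtMost]])
       (auto simp: Lambda_set_def intro: member_le_sum_list)
  then show ?thesis by (simp add: card_lists_length_eq)
qed

lemma Lambda_set_eq_empty:
  assumes "k + 1 < n"
  shows "Lambda_set n k = {}"
proof (rule ccontr)
  assume "Lambda_set n k \<noteq> {}"
  then obtain ks where "length ks = n" "sum_list ks = k" and ge1: "\<forall>j\<in>{2..n}. ks ! (j - 1) \<ge> 1"
    by (auto simp: Lambda_set_def)
  then have "(\<Sum>j=2..n. (1::nat)) \<le> (\<Sum>j=1..n. ks ! (j - 1))"
    using order.trans[OF sum_mono[of "{2..n}" "\<lambda>_. 1" "\<lambda>j. ks ! (j - 1)"] sum_mono2[of "{1..n}" "{2..n}"]]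
    by auto
  also have "\<dots> = k" using sum_nth_pred_eq_sum_list[OF \<open>length ks = n\<close>] \<open>sum_list ks = k\<close> by simp
  finally show False using assms by simp
qed

lemma Lambda_set_Suc_0_0: "Lambda_set (Suc 0) 0 = {[0]}"
  by (auto simp: Lambda_set_def length_Suc_conv)

lemma snoc_in_Lambda_set_iff:
  "xs @ [a] \<in> Lambda_set (Suc m) K \<longleftrightarrow> xs \<in> Lambda_set m (K - a) \<and> a \<le> K \<and> (m \<ge> 1 \<longrightarrow> a \<ge> 1)"
proof -
  have "(\<forall>j\<in>{2..Suc m}. (xs @ [a]) ! (j - 1) \<ge> 1) \<longleftrightarrow> (\<forall>j\<in>{2..m}. xs ! (j - 1) \<ge> 1) \<and> (m \<ge> 1 \<longrightarrow> a \<ge> 1)"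
    if "length xs = m"
  proof -
    have "{2..Suc m} = {2..m} \<union> (if m \<ge> 1 then {Suc m} else {})" by auto
    moreover have "(xs @ [a]) ! (j - 1) = xs ! (j - 1)" if "j \<in> {2..m}" for j
      using that \<open>length xs = m\<close> by (auto simp: nth_append)
    ultimately show ?thesis using \<open>length xs = m\<close> by (auto simp: nth_append)
  qed
  then show ?thesis by (auto simp: Lambda_set_def)
qed

definition incr_last :: "nat list \<Rightarrow> nat list" where
  "incr_last ks = butlast ks @ [Suc (last ks)]"

lemma incr_last_snoc [simp]: "incr_last (xs @ [a]) = xs @ [Suc a]"
  by (simp add: incr_last_def)

lemma Lambda_set_Suc_Suc:
  "Lambda_set (Suc m) (Suc k) =
     incr_last ` Lambda_set (Suc m) k \<union> (if m = 0 then {} else (\<lambda>xs. xs @ [1]) ` Lambda_set m k)"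
proof (intro equalityI subsetI)
  fix ks assume ks: "ks \<in> Lambda_set (Suc m) (Suc k)"
  then obtain xs a where ks_eq: "ks = xs @ [a]"
    using length_Lambda_set[OF ks] by (cases ks rule: rev_cases) auto
  have xs_a: "xs \<in> Lambda_set m (Suc k - a)" "a \<le> Suc k" "m \<ge> 1 \<longrightarrow> a \<ge> 1"
    using ks unfolding ks_eq snoc_in_Lambda_set_iff by auto
  show "ks \<in> incr_last ` Lambda_set (Suc m) k \<union> (if m = 0 then {} else (\<lambda>xs. xs @ [1]) ` Lambda_set m k)"
  proof (cases "a = 1 \<and> m \<ge> 1")
    case True
    then show ?thesis using xs_a ks_eq by auto
  next
    case False
    then have "a \<ge> 1" using xs_a by (cases m) (auto simp: Lambda_set_def)
    then have "xs @ [a - 1] \<in> Lambda_set (Suc m) k"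
      unfolding snoc_in_Lambda_set_iff using xs_a False by (auto simp: Suc_diff_le)
    moreover have "ks = incr_last (xs @ [a - 1])" using ks_eq \<open>a \<ge> 1\<close> by simp
    ultimately show ?thesis by blast
  qed
next
  fix ks assume "ks \<in> incr_last ` Lambda_set (Suc m) k \<union> (if m = 0 then {} else (\<lambda>xs. xs @ [1]) ` Lambda_set m k)"
  then consider xs where "xs \<in> Lambda_set (Suc m) k" "ks = incr_last xs"
    | xs where "m \<ge> 1" "xs \<in> Lambda_set m k" "ks = xs @ [1]"
    by (auto split: if_splits)
  then show "ks \<in> Lambda_set (Suc m) (Suc k)"
  proof cases
    case (1 xs)
    then obtain ys a where "xs = ys @ [a]"
      using length_Lambda_set[OF 1(1)] by (cases xs rule: rev_cases) auto
    then show ?thesis using 1 by (auto simp: snoc_in_Lambda_set_iff Suc_diff_le)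
  qed (simp add: snoc_in_Lambda_set_iff)
qed

lemma sum_Lambda_set_Suc_Suc:
  "(\<Sum>ks\<in>Lambda_set (Suc m) (Suc k). h ks) =
     (\<Sum>ks\<in>Lambda_set (Suc m) k. h (incr_last ks)) + (if m = 0 then 0 else (\<Sum>xs\<in>Lambda_set m k. h (xs @ [1])))"
proof -
  have last_incr: "last ks \<ge> 2" if m: "m \<ge> 1" and ks: "ks \<in> incr_last ` Lambda_set (Suc m) k" for ks
  proof -
    obtain xs where xs: "xs \<in> Lambda_set (Suc m) k" "ks = incr_last xs" using ks by auto
    then obtain ys a where "xs = ys @ [a]"
      using length_Lambda_set[OF xs(1)] by (cases xs rule: rev_cases) auto
    then show ?thesis using xs m by (auto simp: snoc_in_Lambda_set_iff)
  qed
  have inj: "inj_on incr_last (Lambda_set (Suc m) k)"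
  proof (rule inj_onI)
    fix xs ys assume "xs \<in> Lambda_set (Suc m) k" "ys \<in> Lambda_set (Suc m) k" "incr_last xs = incr_last ys"
    then show "xs = ys"
      by (cases xs rule: rev_cases; cases ys rule: rev_cases) (auto dest: length_Lambda_set)
  qed
  have "(\<Sum>ks\<in>Lambda_set (Suc m) (Suc k). h ks) =
      (\<Sum>ks\<in>incr_last ` Lambda_set (Suc m) k. h ks) +
      (\<Sum>ks\<in>(if m = 0 then {} else (\<lambda>xs. xs @ [1]) ` Lambda_set m k). h ks)"
    unfolding Lambda_set_Suc_Suc
  proof (rule sum.union_disjoint)
    have False if "m \<ge> 1" "xs @ [1] \<in> incr_last ` Lambda_set (Suc m) k" for xs
      using last_incr[OF that] by simp
    then show "incr_last ` Lambda_set (Suc m) k \<inter> (if m = 0 then {} else (\<lambda>xs. xs @ [1]) ` Lambda_set m k) = {}"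
      by (auto simp: disjoint_iff) (metis image_eqI)
  qed (simp_all add: finite_Lambda_set)
  also have "\<dots> = (\<Sum>ks\<in>Lambda_set (Suc m) k. h (incr_last ks)) + (if m = 0 then 0 else (\<Sum>xs\<in>Lambda_set m k. h (xs @ [1])))"
    using sum.reindex[OF inj, of h] sum.reindex[of "\<lambda>xs. xs @ [1]" "Lambda_set m k" h] by (simp add: inj_on_def)
  finally show ?thesis .
qed

definition Lambda_exponent :: "(nat \<Rightarrow> real) \<Rightarrow> nat \<Rightarrow> nat list \<Rightarrow> real" where
  "Lambda_exponent nu n ks = (\<Sum>j=1..n. real (ks ! (j - 1)) * nu j)"

definition Lambda_weight :: "nat \<Rightarrow> nat list \<Rightarrow> real" where
  "Lambda_weight n ks = (\<Prod>j=1..n. real j ^ (ks ! (j - 1)))"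

lemma Lambda_exponent_snoc:
  assumes "length xs = m"
  shows "Lambda_exponent nu (Suc m) (xs @ [a]) = Lambda_exponent nu m xs + real a * nu (Suc m)"
proof -
  have "(\<Sum>j=1..m. real ((xs @ [a]) ! (j - 1)) * nu j) = (\<Sum>j=1..m. real (xs ! (j - 1)) * nu j)"
    by (rule sum.cong) (use assms in \<open>auto simp: nth_append\<close>)
  then show ?thesis using assms by (simp add: Lambda_exponent_def nth_append)
qed

lemma Lambda_weight_snoc:
  assumes "length xs = m"
  shows "Lambda_weight (Suc m) (xs @ [a]) = Lambda_weight m xs * real (Suc m) ^ a"
proof -
  have "(\<Prod>j=1..m. real j ^ ((xs @ [a]) ! (j - 1))) = (\<Prod>j=1..m. real j ^ (xs ! (j - 1)))"
    by (rule prod.cong) (use assms in \<open>auto simp: nth_append\<close>)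
  then show ?thesis using assms by (simp add: Lambda_weight_def nth_append)
qed

lemma Lambda_exponent_nonneg: "(\<And>j. j \<ge> 1 \<Longrightarrow> nu j \<ge> 0) \<Longrightarrow> Lambda_exponent nu n ks \<ge> 0"
  unfolding Lambda_exponent_def by (intro sum_nonneg) auto

lemma Lambda_exponent_bounds:
  assumes ks: "ks \<in> Lambda_set n k" and nu: "\<And>j. j \<in> {1..n} \<Longrightarrow> mu \<le> nu j \<and> nu j \<le> 1"
  shows "mu * real k \<le> Lambda_exponent nu n ks" "Lambda_exponent nu n ks \<le> real k"
proof -
  have k: "(\<Sum>j=1..n. real (ks ! (j - 1))) = real k"
    using sum_nth_pred_eq_sum_list[of ks n] ks by (simp add: Lambda_set_def flip: of_nat_sum)
  have "(\<Sum>j=1..n. real (ks ! (j - 1)) * mu) \<le> Lambda_exponent nu n ks"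
    unfolding Lambda_exponent_def by (intro sum_mono mult_left_mono) (use nu in auto)
  then show "mu * real k \<le> Lambda_exponent nu n ks"
    using k by (simp add: sum_distrib_right[symmetric] sum_distrib_left[symmetric] mult.commute)
  have "Lambda_exponent nu n ks \<le> (\<Sum>j=1..n. real (ks ! (j - 1)) * 1)"
    unfolding Lambda_exponent_def by (intro sum_mono mult_left_mono) (use nu in auto)
  then show "Lambda_exponent nu n ks \<le> real k" using k by simp
qed

lemma Lambda_weight_bounds:
  assumes ks: "ks \<in> Lambda_set n k"
  shows "0 \<le> Lambda_weight n ks" "Lambda_weight n ks \<le> real n ^ k"
proof -
  show "0 \<le> Lambda_weight n ks" unfolding Lambda_weight_def by (intro prod_nonneg) auto
  have "Lambda_weight n ks \<le> (\<Prod>j=1..n. real n ^ (ks ! (j - 1)))"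
    unfolding Lambda_weight_def by (intro prod_mono conjI power_mono) auto
  also have "\<dots> = real n ^ (\<Sum>j=1..n. ks ! (j - 1))" by (simp add: power_sum)
  also have "\<dots> = real n ^ k" using sum_nth_pred_eq_sum_list[of ks n] ks by (simp add: Lambda_set_def)
  finally show "Lambda_weight n ks \<le> real n ^ k" .
qed

definition Lambda_sum :: "(nat \<Rightarrow> real) \<Rightarrow> nat \<Rightarrow> nat \<Rightarrow> real \<Rightarrow> real" where
  "Lambda_sum nu n k t =
     (\<Sum>ks\<in>Lambda_set n k. Lambda_weight n ks * gamma_power (Lambda_exponent nu n ks) t)"

lemma continuous_on_Lambda_sum:
  assumes "\<And>j. j \<ge> 1 \<Longrightarrow> nu j \<ge> 0"
  shows "continuous_on {0..} (Lambda_sum nu n k)"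
  unfolding Lambda_sum_def[abs_def]
  by (intro continuous_on_sum continuous_intros continuous_on_gamma_power Lambda_exponent_nonneg assms)

lemma frac_integral_Lambda_sum:
  assumes v: "v > 0" and t: "t \<ge> 0" and nu: "\<And>j. j \<ge> 1 \<Longrightarrow> nu j \<ge> 0"
  shows "frac_integral v (Lambda_sum nu n k) t =
    (\<Sum>ks\<in>Lambda_set n k. Lambda_weight n ks * gamma_power (Lambda_exponent nu n ks + v) t)"
  unfolding Lambda_sum_def[abs_def]
  by (rule frac_integral_sum_gamma_power[OF v t Lambda_exponent_nonneg[OF nu]])

lemma Lambda_sum_Suc_Suc:
  assumes t: "t \<ge> 0" and nu: "\<And>j. j \<ge> 1 \<Longrightarrow> nu j > 0"
  shows "Lambda_sum nu (Suc m) (Suc k) t = real (Suc m) *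
    (frac_integral (nu (Suc m)) (Lambda_sum nu (Suc m) k) t +
     (if m = 0 then 0 else frac_integral (nu (Suc m)) (Lambda_sum nu m k) t))"
proof -
  define v where "v = nu (Suc m)"
  have v: "v > 0" using nu by (simp add: v_def)
  have nu0: "\<And>j. j \<ge> 1 \<Longrightarrow> nu j \<ge> 0" using nu less_imp_le by blast
  have incr: "Lambda_weight (Suc m) (incr_last ks) * gamma_power (Lambda_exponent nu (Suc m) (incr_last ks)) t
      = real (Suc m) * (Lambda_weight (Suc m) ks * gamma_power (Lambda_exponent nu (Suc m) ks + v) t)"
    if ks: "ks \<in> Lambda_set (Suc m) k" for ks
  proof -
    obtain xs a where "ks = xs @ [a]" "length xs = m"
      using length_Lambda_set[OF ks] by (cases ks rule: rev_cases) auto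
    then show ?thesis by (simp add: Lambda_weight_snoc Lambda_exponent_snoc v_def algebra_simps)
  qed
  have append_one: "Lambda_weight (Suc m) (xs @ [1]) * gamma_power (Lambda_exponent nu (Suc m) (xs @ [1])) t
      = real (Suc m) * (Lambda_weight m xs * gamma_power (Lambda_exponent nu m xs + v) t)"
    if "xs \<in> Lambda_set m k" for xs
    using length_Lambda_set[OF that] by (simp add: Lambda_weight_snoc Lambda_exponent_snoc v_def mult_ac)
  have "(\<Sum>ks\<in>Lambda_set (Suc m) k. Lambda_weight (Suc m) (incr_last ks) * gamma_power (Lambda_exponent nu (Suc m) (incr_last ks)) t)
      = (\<Sum>ks\<in>Lambda_set (Suc m) k. real (Suc m) * (Lambda_weight (Suc m) ks * gamma_power (Lambda_exponent nu (Suc m) ks + v) t))"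
    by (rule sum.cong[OF refl incr])
  also have "\<dots> = real (Suc m) * frac_integral v (Lambda_sum nu (Suc m) k) t"
    by (simp add: frac_integral_Lambda_sum[where nu = nu, OF v t nu0] sum_distrib_left)
  moreover have "(\<Sum>xs\<in>Lambda_set m k. Lambda_weight (Suc m) (xs @ [1]) * gamma_power (Lambda_exponent nu (Suc m) (xs @ [1])) t)
      = (\<Sum>xs\<in>Lambda_set m k. real (Suc m) * (Lambda_weight m xs * gamma_power (Lambda_exponent nu m xs + v) t))"
    by (rule sum.cong[OF refl append_one])
  moreover have "\<dots> = real (Suc m) * frac_integral v (Lambda_sum nu m k) t"
    by (simp add: frac_integral_Lambda_sum[where nu = nu, OF v t nu0] sum_distrib_left)
  ultimately show ?thesis
    unfolding Lambda_sum_def[of nu "Suc m" "Suc k" t] sum_Lambda_set_Suc_Suc v_def[symmetric]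
    by (simp add: distrib_left)
qed

lemma Lambda_sum_0:
  assumes "n \<ge> 1"
  shows "Lambda_sum nu n 0 t = (if n = 1 then 1 else 0)"
proof (cases "n = 1")
  case True
  then show ?thesis
    by (simp add: Lambda_sum_def Lambda_set_Suc_0_0 Lambda_weight_def Lambda_exponent_def gamma_power_def)
next
  case False
  then show ?thesis using assms by (simp add: Lambda_sum_def Lambda_set_eq_empty)
qed

lemma abs_Lambda_sum_le:
  fixes mu x R t :: real
  assumes mu: "mu > 0" and x: "x \<ge> 1" and R: "R \<ge> 1" and t: "0 \<le> t" "t \<le> R"
    and nu: "\<And>j. j \<in> {1..n} \<Longrightarrow> mu \<le> nu j \<and> nu j \<le> 1"
  shows "\<bar>Lambda_sum nu n k t\<bar> \<le> 2 * exp x * x * (2 ^ n * real n * R * x powr (- mu)) ^ k"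
proof -
  define b where "b = R ^ k * (2 * exp x * x) * (x powr (- mu)) ^ k"
  have b: "b \<ge> 0" using R x by (simp add: b_def)
  have summand: "\<bar>Lambda_weight n ks * gamma_power (Lambda_exponent nu n ks) t\<bar> \<le> real n ^ k * b"
    if ks: "ks \<in> Lambda_set n k" for ks
    using Lambda_weight_bounds[OF ks] abs_gamma_power_le[OF mu x R t Lambda_exponent_bounds[OF ks nu]] b
    unfolding b_def by (auto simp: abs_mult intro!: mult_mono)
  have "card (Lambda_set n k) \<le> (k + 1) ^ n" by (rule card_Lambda_set_le)
  also have "\<dots> \<le> (2 ^ k) ^ n" by (intro power_mono) (use less_exp[of k] in \<open>auto simp: Suc_le_eq\<close>)
  also have "\<dots> = (2 ^ n) ^ k" by (simp add: power_mult[symmetric] mult.commute)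
  finally have card: "real (card (Lambda_set n k)) \<le> (2 ^ n) ^ k"
    by (metis of_nat_le_iff of_nat_numeral of_nat_power)
  have "\<bar>Lambda_sum nu n k t\<bar> \<le> (\<Sum>ks\<in>Lambda_set n k. \<bar>Lambda_weight n ks * gamma_power (Lambda_exponent nu n ks) t\<bar>)"
    unfolding Lambda_sum_def by (rule sum_abs)
  also have "\<dots> \<le> real (card (Lambda_set n k)) * (real n ^ k * b)"
    by (rule sum_bounded_above) (use summand in auto)
  also have "\<dots> \<le> (2 ^ n) ^ k * (real n ^ k * b)"
    using card b by (intro mult_right_mono) auto
  also have "\<dots> = 2 * exp x * x * (2 ^ n * real n * R * x powr (- mu)) ^ k"
    by (simp add: b_def power_mult_distrib mult_ac)
  finally show ?thesis .
qed

section \<open>The series solution\<close>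

definition birth_term :: "real \<Rightarrow> (nat \<Rightarrow> real) \<Rightarrow> nat \<Rightarrow> nat \<Rightarrow> real \<Rightarrow> real" where
  "birth_term lam nu n k t = (-1) ^ (n - 1) / real n * (- lam) ^ k * Lambda_sum nu n k t"

definition birth_series :: "real \<Rightarrow> (nat \<Rightarrow> real) \<Rightarrow> nat \<Rightarrow> real \<Rightarrow> real" where
  "birth_series lam nu n t = (\<Sum>k. birth_term lam nu n k t)"

lemma continuous_on_birth_term:
  "(\<And>j. j \<ge> 1 \<Longrightarrow> nu j \<ge> 0) \<Longrightarrow> continuous_on {0..} (birth_term lam nu n k)"
  unfolding birth_term_def[abs_def] by (intro continuous_intros continuous_on_Lambda_sum)

lemma birth_term_0: "n \<ge> 1 \<Longrightarrow> birth_term lam nu n 0 t = (if n = 1 then 1 else 0)"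
  by (simp add: birth_term_def Lambda_sum_0)

lemma birth_term_Suc_Suc:
  assumes t: "t \<ge> 0" and nu: "\<And>j. j \<ge> 1 \<Longrightarrow> nu j > 0"
  shows "birth_term lam nu (Suc m) (Suc k) t = frac_integral (nu (Suc m))
    (\<lambda>s. - lam * real (Suc m) * birth_term lam nu (Suc m) k s + lam * real m * birth_term lam nu m k s) t"
proof -
  define A where "A = (-1) ^ m * (- lam) ^ Suc k"
  define B where "B = lam * real m * ((-1) ^ (m - 1) / real m * (- lam) ^ k)"
  have B: "B = (if m = 0 then 0 else A)"
    by (cases m) (simp_all add: A_def B_def)
  have cont: "continuous_on {0..t} (\<lambda>s. c * Lambda_sum nu n k s)" for c n
    using nu by (intro continuous_intros continuous_on_subset[OF continuous_on_Lambda_sum]) (auto intro: less_imp_le)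
  have "(\<lambda>s. - lam * real (Suc m) * birth_term lam nu (Suc m) k s + lam * real m * birth_term lam nu m k s)
      = (\<lambda>s. A * Lambda_sum nu (Suc m) k s + B * Lambda_sum nu m k s)"
    by (simp add: fun_eq_iff birth_term_def A_def B_def)
  then have "frac_integral (nu (Suc m))
      (\<lambda>s. - lam * real (Suc m) * birth_term lam nu (Suc m) k s + lam * real m * birth_term lam nu m k s) t
      = A * frac_integral (nu (Suc m)) (Lambda_sum nu (Suc m) k) t + B * frac_integral (nu (Suc m)) (Lambda_sum nu m k) t"
    using nu t by (simp add: frac_integral_add[OF _ t cont cont] frac_integral_cmult)
  also have "\<dots> = birth_term lam nu (Suc m) (Suc k) t"
    using Lambda_sum_Suc_Suc[OF t nu, where m = m and k = k] by (simp add: birth_term_def A_def B distrib_left)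
  finally show ?thesis ..
qed

lemma birth_term_geometric_bound:
  fixes lam R :: real
  assumes nu: "\<And>j. j \<ge> 1 \<Longrightarrow> 0 < nu j \<and> nu j \<le> 1"
  obtains C rho where "0 \<le> C" "0 \<le> rho" "rho < 1"
    "\<And>k t. 0 \<le> t \<Longrightarrow> t \<le> R \<Longrightarrow> \<bar>birth_term lam nu n k t\<bar> \<le> C * rho ^ k"
proof (cases "n = 0")
  case True
  then show ?thesis by (intro that[of 0 0]) (auto simp: birth_term_def)
next
  case False
  define R' where "R' = max 1 R"
  define mu where "mu = Min (nu ` {1..n})"
  have mu: "mu > 0" unfolding mu_def using False nu by (subst Min_gr_iff) auto
  have mu_le: "mu \<le> nu j \<and> nu j \<le> 1" if "j \<in> {1..n}" for j
    unfolding mu_def using that nu by (auto intro: Min_le)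
  define A where "A = \<bar>lam\<bar> * (2 ^ n * real n * R')"
  have A: "A \<ge> 0" by (simp add: A_def R'_def)
  txt \<open>Choose \<open>x\<close> with \<open>x\<^sup>\<mu> > A\<close>, so that \<open>\<rho> = A x\<^sup>-\<^sup>\<mu> < 1\<close>.\<close>
  define x where "x = max 1 ((A + 1) powr (1 / mu))"
  have x: "x \<ge> 1" by (simp add: x_def)
  have "A + 1 = ((A + 1) powr (1 / mu)) powr mu" using mu A by (simp add: powr_powr)
  also have "\<dots> \<le> x powr mu" using mu A by (intro powr_mono2) (auto simp: x_def)
  finally have "A < x powr mu" by simp
  then have rho: "A * x powr (- mu) < 1" using x by (simp add: powr_minus divide_less_eq field_simps)
  show ?thesis
  proof (rule that[of "2 * exp x * x" "A * x powr (- mu)"])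
    fix k t assume t: "0 \<le> t" "t \<le> R"
    have "\<bar>birth_term lam nu n k t\<bar> = 1 / real n * \<bar>lam\<bar> ^ k * \<bar>Lambda_sum nu n k t\<bar>"
      by (simp add: birth_term_def abs_mult power_abs)
    also have "\<dots> \<le> 1 * \<bar>lam\<bar> ^ k * (2 * exp x * x * (2 ^ n * real n * R' * x powr (- mu)) ^ k)"
      using False t abs_Lambda_sum_le[where nu = nu and n = n and R = R' and t = t and k = k, OF mu x _ _ _ mu_le]
      by (intro mult_mono) (auto simp: R'_def)
    also have "\<dots> = 2 * exp x * x * (A * x powr (- mu)) ^ k"
      by (simp add: A_def power_mult_distrib mult_ac)
    finally show "\<bar>birth_term lam nu n k t\<bar> \<le> 2 * exp x * x * (A * x powr (- mu)) ^ k" .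
  qed (use x A rho in auto)
qed

lemma uniform_limit_birth_series:
  assumes nu: "\<And>j. j \<ge> 1 \<Longrightarrow> 0 < nu j \<and> nu j \<le> 1"
  shows "uniform_limit {0..R} (\<lambda>N s. \<Sum>k<N. birth_term lam nu n k s) (birth_series lam nu n) sequentially"
proof -
  obtain C rho where C: "0 \<le> C" "0 \<le> rho" "rho < 1"
    and bound: "\<And>k t. 0 \<le> t \<Longrightarrow> t \<le> R \<Longrightarrow> \<bar>birth_term lam nu n k t\<bar> \<le> C * rho ^ k"
    using birth_term_geometric_bound[where nu = nu and lam = lam and n = n and R = R, OF nu] by blast
  show ?thesis
    unfolding birth_series_def
    by (rule Weierstrass_m_test[where M = "\<lambda>k. C * rho ^ k"])
       (use bound C in \<open>auto intro!: summable_mult summable_geometric\<close>)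
qed

lemma birth_term_sums:
  assumes nu: "\<And>j. j \<ge> 1 \<Longrightarrow> 0 < nu j \<and> nu j \<le> 1" and t: "t \<ge> 0"
  shows "(\<lambda>k. birth_term lam nu n k t) sums birth_series lam nu n t"
proof -
  have "(\<lambda>N. \<Sum>k<N. birth_term lam nu n k t) \<longlonglongrightarrow> birth_series lam nu n t"
    using tendsto_uniform_limitI[OF uniform_limit_birth_series[where nu = nu and lam = lam and n = n and R = t, OF nu]] t by simp
  then show ?thesis by (simp add: sums_def)
qed

lemma continuous_on_birth_series:
  assumes nu: "\<And>j. j \<ge> 1 \<Longrightarrow> 0 < nu j \<and> nu j \<le> 1"
  shows "continuous_on {0..R} (birth_series lam nu n)"
proof (rule uniform_limit_theorem[OF _ uniform_limit_birth_series[where nu = nu, OF nu]])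
  have "\<And>j. j \<ge> 1 \<Longrightarrow> nu j \<ge> 0" using nu by (auto intro: less_imp_le)
  then show "\<forall>\<^sub>F N in sequentially. continuous_on {0..R} (\<lambda>s. \<Sum>k<N. birth_term lam nu n k s)"
    by (intro always_eventually allI continuous_on_sum continuous_on_subset[OF continuous_on_birth_term]) auto
qed auto

lemma birth_series_integral_equation:
  assumes nu: "\<And>j. j \<ge> 1 \<Longrightarrow> 0 < nu j \<and> nu j \<le> 1" and t: "t \<ge> 0"
  shows "birth_series lam nu (Suc m) t = birth_term lam nu (Suc m) 0 t + frac_integral (nu (Suc m))
    (\<lambda>s. - lam * real (Suc m) * birth_series lam nu (Suc m) s + lam * real m * birth_series lam nu m s) t"
proof -
  define g where "g = (\<lambda>k s. - lam * real (Suc m) * birth_term lam nu (Suc m) k s + lam * real m * birth_term lam nu m k s)"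
  have nu_pos: "\<And>j. j \<ge> 1 \<Longrightarrow> nu j > 0" and nu_nonneg: "\<And>j. j \<ge> 1 \<Longrightarrow> nu j \<ge> 0"
    using nu by (auto intro: less_imp_le)
  have g_cont: "continuous_on {0..t} (g k)" for k
    unfolding g_def
    by (intro continuous_intros continuous_on_subset[OF continuous_on_birth_term[where nu = nu, OF nu_nonneg]]) auto
  have "uniform_limit {0..t} (\<lambda>N s. (- lam * real (Suc m)) * (\<Sum>k<N. birth_term lam nu (Suc m) k s) + (lam * real m) * (\<Sum>k<N. birth_term lam nu m k s))
      (\<lambda>s. (- lam * real (Suc m)) * birth_series lam nu (Suc m) s + (lam * real m) * birth_series lam nu m s) sequentially"
    by (intro uniform_limit_add bounded_linear.uniform_limit[OF bounded_linear_mult_right]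
        uniform_limit_birth_series[where nu = nu, OF nu])
  moreover have "(\<lambda>N s. (- lam * real (Suc m)) * (\<Sum>k<N. birth_term lam nu (Suc m) k s) + (lam * real m) * (\<Sum>k<N. birth_term lam nu m k s))
      = (\<lambda>N s. \<Sum>k<N. g k s)"
    by (simp only: g_def sum.distrib sum_distrib_left mult.assoc)
  ultimately have "uniform_limit {0..t} (\<lambda>N s. \<Sum>k<N. g k s)
      (\<lambda>s. - lam * real (Suc m) * birth_series lam nu (Suc m) s + lam * real m * birth_series lam nu m s) sequentially"
    by simp
  from frac_integral_sums[OF nu_pos[of "Suc m", simplified] t g_cont this]
  have "(\<lambda>k. frac_integral (nu (Suc m)) (g k) t) sums frac_integral (nu (Suc m))
      (\<lambda>s. - lam * real (Suc m) * birth_series lam nu (Suc m) s + lam * real m * birth_series lam nu m s) t"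
    by simp
  moreover have "(\<lambda>k. frac_integral (nu (Suc m)) (g k) t) = (\<lambda>k. birth_term lam nu (Suc m) (Suc k) t)"
    by (rule ext) (simp only: g_def birth_term_Suc_Suc[where nu = nu, OF t nu_pos])
  ultimately have shifted: "(\<lambda>k. birth_term lam nu (Suc m) (Suc k) t) sums frac_integral (nu (Suc m))
      (\<lambda>s. - lam * real (Suc m) * birth_series lam nu (Suc m) s + lam * real m * birth_series lam nu m s) t"
    by simp
  have "(\<lambda>k. birth_term lam nu (Suc m) (Suc k) t) sums (birth_series lam nu (Suc m) t - birth_term lam nu (Suc m) 0 t)"
    using birth_term_sums[where nu = nu and lam = lam and n = "Suc m", OF nu t] by (subst sums_Suc_iff) simp
  from sums_unique2[OF this shifted] show ?thesis by simp
qed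

theorem birth_solution_eq_series:
  fixes lam :: real and nu :: "nat \<Rightarrow> real" and p :: "nat \<Rightarrow> real \<Rightarrow> real"
  assumes nu: "\<And>n. n \<ge> 1 \<Longrightarrow> 0 < nu n \<and> nu n \<le> 1"
    and reg: "\<And>n. n \<ge> 1 \<Longrightarrow> caputo_regular (nu n) (p n)"
    and eq: "\<And>n t. n \<ge> 1 \<Longrightarrow> t > 0 \<Longrightarrow>
               caputo (nu n) (p n) t = - lam * real n * p n t + lam * real (n - 1) * p (n - 1) t"
    and p0: "\<And>t. p 0 t = 0"
    and init1: "p 1 0 = 1"
    and init: "\<And>n. n \<ge> 2 \<Longrightarrow> p n 0 = 0"
    and t: "t \<ge> 0"
  shows "p n t = birth_series lam nu n t"
  using t
proof (induction n arbitrary: t)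
  case 0
  then show ?case by (simp add: p0 birth_series_def birth_term_def)
next
  case (Suc m)
  define v where "v = nu (Suc m)"
  have v: "0 < v" "v \<le> 1" using nu[of "Suc m"] by (auto simp: v_def)
  have p_cont: "continuous_on {0..} (p n)" for n
  proof (cases "n = 0")
    case True
    then have "p n = (\<lambda>_. 0)" using p0 by (simp add: fun_eq_iff)
    then show ?thesis by simp
  next
    case False
    then show ?thesis using reg[of n] by (simp add: caputo_regular_def)
  qed
  define r where "r = (\<lambda>x. lam * real m * p m x)"
  have r: "continuous_on {0..} r" unfolding r_def by (intro continuous_intros p_cont)
  show ?case
  proof (rule volterra_linear_eq_unique[OF v(1) _ _ r _ _ Suc.prems])
    show "continuous_on {0..R} (p (Suc m))" for R by (rule continuous_on_subset[OF p_cont]) auto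
    show "continuous_on {0..R} (birth_series lam nu (Suc m))" for R
      by (rule continuous_on_birth_series[where nu = nu, OF nu])
    show "p (Suc m) s = p (Suc m) 0 + frac_integral v (\<lambda>x. - lam * real (Suc m) * p (Suc m) x + r x) s"
      if s: "s \<ge> 0" for s
    proof (rule caputo_eq_imp_frac_integral_eq[OF v _ _ _ s])
      show "caputo_regular v (p (Suc m))" using reg[of "Suc m"] by (simp add: v_def)
      show "continuous_on {0..} (\<lambda>x. - lam * real (Suc m) * p (Suc m) x + r x)"
        by (intro continuous_intros p_cont r)
      show "caputo v (p (Suc m)) x = - lam * real (Suc m) * p (Suc m) x + r x" if "x > 0" for x
        using eq[of "Suc m" x] that by (simp add: v_def r_def)
    qed
    show "birth_series lam nu (Suc m) s
        = p (Suc m) 0 + frac_integral v (\<lambda>x. - lam * real (Suc m) * birth_series lam nu (Suc m) x + r x) s"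
      if s: "s \<ge> 0" for s
    proof -
      have "birth_term lam nu (Suc m) 0 s = p (Suc m) 0"
        using birth_term_0[of "Suc m" lam nu s] init1 init[of "Suc m"] by (cases m) auto
      moreover have "frac_integral v (\<lambda>x. - lam * real (Suc m) * birth_series lam nu (Suc m) x + lam * real m * birth_series lam nu m x) s
          = frac_integral v (\<lambda>x. - lam * real (Suc m) * birth_series lam nu (Suc m) x + r x) s"
        using Suc.IH by (intro frac_integral_cong) (simp add: r_def)
      ultimately show ?thesis
        using birth_series_integral_equation[where nu = nu and lam = lam and m = m, OF nu s] by (simp add: v_def)
    qed
  qed
qed

theorem corollary5p4:
  fixes lam :: real and nu :: "nat \<Rightarrow> real" and p :: "nat \<Rightarrow> real \<Rightarrow> real"
  assumes lam_pos: "lam > 0"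
    and nu_range: "\<And>n. n \<ge> 1 \<Longrightarrow> 0 < nu n \<and> nu n \<le> 1"
    and reg: "\<And>n. n \<ge> 1 \<Longrightarrow> caputo_regular (nu n) (p n)"
    and eq: "\<And>n t. n \<ge> 1 \<Longrightarrow> t > 0 \<Longrightarrow>
               caputo (nu n) (p n) t = - lam * real n * p n t + lam * real (n - 1) * p (n - 1) t"
    and p0: "\<And>t. p 0 t = 0"
    and init1: "p 1 0 = 1"
    and init: "\<And>n. n \<ge> 2 \<Longrightarrow> p n 0 = 0"
    and n_pos: "n \<ge> 1"
    and t_pos: "t > 0"
  shows "(\<lambda>i. let k = i + (n - 1) in
            ((-1) ^ (n - 1) / real n) * (- lam) ^ k *
            (\<Sum>ks\<in>Lambda_set n k.
               t powr (\<Sum>j=1..n. real (ks ! (j - 1)) * nu j) *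
               (\<Prod>j=1..n. real j ^ (ks ! (j - 1))) /
               Gamma (1 + (\<Sum>j=1..n. real (ks ! (j - 1)) * nu j))))
         sums p n t"
proof -
  have "(\<lambda>k. birth_term lam nu n k t) sums p n t"
    using birth_term_sums[where nu = nu and lam = lam and n = n, OF nu_range] t_pos
      birth_solution_eq_series[where nu = nu and lam = lam and p = p, OF nu_range reg eq p0 init1 init]
    by simp
  moreover have "(\<Sum>k<n - 1. birth_term lam nu n k t) = 0"
    by (intro sum.neutral) (auto simp: birth_term_def Lambda_sum_def Lambda_set_eq_empty)
  ultimately have "(\<lambda>i. birth_term lam nu n (i + (n - 1)) t) sums p n t"
    using sums_iff_shift[of "\<lambda>k. birth_term lam nu n k t" "n - 1"] by simp
  moreover have "t powr e * w / Gamma (1 + e) = w * gamma_power e t" for e w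
    using t_pos by (simp add: gamma_power_def)
  ultimately show ?thesis
    by (simp add: Let_def birth_term_def Lambda_sum_def Lambda_weight_def Lambda_exponent_def)
qed

end
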